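(* For a function $H:\{0,1\}^{u+1}\to\{0,1\}^v$ let $|\psi_H\rangle:=\sum_{R\in\{0,1\}^{u+1}}|R\rangle|H(R)\rangle$ (normalized). For every integer $m$ and every (unbounded-time) quantum algorithm $\mathcal{A}$, $$\Pr_H\big[y_0=H(0\|r)\wedge y_1=H(1\|r):(r,y_0,y_1)\gets\mathcal{A}(|\psi_H\rangle^{\otimes m})\big]\le(2m+1)^4(2^{-u}+2^{-v}),$$ where $H$ is a uniformly random function from $\{0,1\}^{u+1}$ to $\{0,1\}^v$ and $r\in\{0,1\}^u$.
   Context: $\|$ denotes concatenation of bit strings; $u,v$ are positive integers. *)

theory Defs
  imports Complex_Main "HOL-Library.FuncSet"
begin

text \<open>Bit strings of length n, as boolean lists; concatenation is list append / Cons.\<close>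
definition bits :: "nat \<Rightarrow> bool list set" where
  "bits n = {xs. length xs = n}"

text \<open>Computational basis of the m-fold tensor power of the register space
  C^({0,1}^(u+1)) (x) C^({0,1}^v): lists of m pairs (R, y).\<close>
definition basis :: "nat \<Rightarrow> nat \<Rightarrow> nat \<Rightarrow> (bool list \<times> bool list) list set" where
  "basis u v m = {xs. length xs = m \<and> (\<forall>p\<in>set xs. fst p \<in> bits (u+1) \<and> snd p \<in> bits v)}"

text \<open>Amplitudes of the normalized state psi_H = 2^(-(u+1)/2) sum_R |R>|H(R)>.\<close>
definition psi :: "nat \<Rightarrow> (bool list \<Rightarrow> bool list) \<Rightarrow> bool list \<times> bool list \<Rightarrow> complex" where
  "psi u H p = (if snd p = H (fst p) then complex_of_real (1 / sqrt (2 ^ (u+1))) else 0)"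

definition psi_tensor :: "nat \<Rightarrow> (bool list \<Rightarrow> bool list) \<Rightarrow> (bool list \<times> bool list) list \<Rightarrow> complex" where
  "psi_tensor u H xs = prod_list (map (psi u H) xs)"

definition psd :: "'b set \<Rightarrow> ('b \<Rightarrow> 'b \<Rightarrow> complex) \<Rightarrow> bool" where
  "psd S A \<longleftrightarrow> (\<forall>a\<in>S. \<forall>b\<in>S. A a b = cnj (A b a)) \<and>
     (\<forall>w :: 'b \<Rightarrow> complex. let q = (\<Sum>a\<in>S. \<Sum>b\<in>S. cnj (w a) * A a b * w b) in Im q = 0 \<and> Re q \<ge> 0)"

definition is_povm :: "'b set \<Rightarrow> 'o set \<Rightarrow> ('o \<Rightarrow> 'b \<Rightarrow> 'b \<Rightarrow> complex) \<Rightarrow> bool" where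
  "is_povm S Outs M \<longleftrightarrow> (\<forall>oc\<in>Outs. psd S (M oc)) \<and>
     (\<forall>a\<in>S. \<forall>b\<in>S. (\<Sum>oc\<in>Outs. M oc a b) = (if a = b then 1 else 0))"

definition outcome_prob :: "'b set \<Rightarrow> ('o \<Rightarrow> 'b \<Rightarrow> 'b \<Rightarrow> complex) \<Rightarrow> 'o \<Rightarrow> ('b \<Rightarrow> complex) \<Rightarrow> real" where
  "outcome_prob S M oc phi = Re (\<Sum>a\<in>S. \<Sum>b\<in>S. cnj (phi a) * M oc a b * phi b)"

definition outputs :: "nat \<Rightarrow> nat \<Rightarrow> (bool list \<times> bool list \<times> bool list) set" where
  "outputs u v = bits u \<times> bits v \<times> bits v"

text \<open>Success probability over a uniformly random H : {0,1}^(u+1) -> {0,1}^v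
  of the algorithm described by POVM M on input psi_H^{(x) m}.\<close>
definition success_prob :: "nat \<Rightarrow> nat \<Rightarrow> nat \<Rightarrow>
    (bool list \<times> bool list \<times> bool list \<Rightarrow> (bool list \<times> bool list) list \<Rightarrow> (bool list \<times> bool list) list \<Rightarrow> complex) \<Rightarrow> real" where
  "success_prob u v m M =
     (\<Sum>H\<in>bits (u+1) \<rightarrow>\<^sub>E bits v.
        \<Sum>oc\<in>{(r, y0, y1) \<in> outputs u v. y0 = H (False # r) \<and> y1 = H (True # r)}.
          outcome_prob (basis u v m) M oc (psi_tensor u H))
     / real (card (bits (u+1) \<rightarrow>\<^sub>E bits v))"

end

theory Submission
  imports Defs
begin

text \<open>
  Measured in the computational basis, psi_H^(x)m consists of m independent uniform inputs R
  together with their values H(R).  For an output r, split the state according to which of the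
  inputs 1||r and 0||r occur among the m registers: the part without 1||r does not depend on
  H(1||r), the part with 1||r but without 0||r does not depend on H(0||r), and the part with both
  is small.  Resampling the value a part does not depend on shows that from it the algorithm
  guesses that value only with probability 2^(-v) times its weight.  By the union bound the
  squared norms of the parts containing 1||r, resp. both points, summed over r, are at most m/2,
  resp. m^2/2^(u+2).  Two applications of the parallelogram bound P(x + y) <= 2 P(x) + 2 P(y)
  for an outcome probability P give (4 + 4m) 2^(-v) + m^2 2^(-u).  For m = 0 the state does not
  depend on H and the success probability is at most 2^(-v).
\<close>

definition sq_norm_on :: "'b set \<Rightarrow> ('b \<Rightarrow> complex) \<Rightarrow> real" where
  "sq_norm_on S w = (\<Sum>a\<in>S. (cmod (w a))\<^sup>2)"

definition basis_proj :: "('b \<Rightarrow> bool) \<Rightarrow> ('b \<Rightarrow> complex) \<Rightarrow> 'b \<Rightarrow> complex" where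
  "basis_proj P w a = (if P a then w a else 0)"

lemma sq_norm_on_basis_proj:
  "sq_norm_on S (basis_proj P w) = (\<Sum>a\<in>S. (cmod (w a))\<^sup>2 * of_bool (P a))"
  unfolding sq_norm_on_def basis_proj_def by (intro sum.cong) auto

lemma sq_norm_on_basis_proj_mono:
  "(\<And>a. P a \<Longrightarrow> R a) \<Longrightarrow> sq_norm_on S (basis_proj P w) \<le> sq_norm_on S (basis_proj R w)"
  unfolding sq_norm_on_basis_proj by (intro sum_mono mult_left_mono) auto

lemma outcome_prob_cong:
  "(\<And>a. a \<in> S \<Longrightarrow> w a = w' a) \<Longrightarrow> outcome_prob S M oc w = outcome_prob S M oc w'"
  unfolding outcome_prob_def by (auto intro!: sum.cong arg_cong[where f = Re])

lemma outcome_prob_nonneg: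
  "is_povm S Outs M \<Longrightarrow> oc \<in> Outs \<Longrightarrow> 0 \<le> outcome_prob S M oc w"
  unfolding is_povm_def psd_def outcome_prob_def Let_def by blast

lemma sum_outcome_prob:
  assumes povm: "is_povm S Outs M" and "finite S"
  shows "(\<Sum>oc\<in>Outs. outcome_prob S M oc w) = sq_norm_on S w"
proof -
  have completeness: "(\<Sum>b\<in>S. cnj (w a) * (\<Sum>oc\<in>Outs. M oc a b) * w b) = cnj (w a) * w a"
    if "a \<in> S" for a
  proof -
    have "(\<Sum>b\<in>S. cnj (w a) * (\<Sum>oc\<in>Outs. M oc a b) * w b)
        = (\<Sum>b\<in>S. if a = b then cnj (w a) * w b else 0)"
      using povm \<open>a \<in> S\<close> unfolding is_povm_def by (intro sum.cong) auto
    also have "\<dots> = cnj (w a) * w a"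
      using \<open>finite S\<close> \<open>a \<in> S\<close> by simp
    finally show ?thesis .
  qed
  have "(\<Sum>oc\<in>Outs. outcome_prob S M oc w)
      = Re (\<Sum>a\<in>S. \<Sum>b\<in>S. cnj (w a) * (\<Sum>oc\<in>Outs. M oc a b) * w b)"
    unfolding outcome_prob_def
    by (simp add: sum.swap[of _ Outs] sum_distrib_left sum_distrib_right)
  also have "\<dots> = (\<Sum>a\<in>S. Re (cnj (w a) * w a))"
    by (simp add: completeness)
  also have "\<dots> = sq_norm_on S w"
    unfolding sq_norm_on_def by (simp add: complex_mult_cnj cmod_def power2_eq_square)
  finally show ?thesis .
qed

lemma sum_outcome_prob_subset_le:
  assumes povm: "is_povm S Outs M" and "finite S" "finite Outs" "Os \<subseteq> Outs"
  shows "(\<Sum>oc\<in>Os. outcome_prob S M oc w) \<le> sq_norm_on S w"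
proof -
  have "(\<Sum>oc\<in>Os. outcome_prob S M oc w) \<le> (\<Sum>oc\<in>Outs. outcome_prob S M oc w)"
    using assms outcome_prob_nonneg[OF povm] by (intro sum_mono2) auto
  then show ?thesis
    using sum_outcome_prob[OF povm \<open>finite S\<close>] by simp
qed

lemma outcome_prob_le_sq_norm_on:
  assumes "is_povm S Outs M" "finite S" "finite Outs" "oc \<in> Outs"
  shows "outcome_prob S M oc w \<le> sq_norm_on S w"
  using sum_outcome_prob_subset_le[OF assms(1-3), of "{oc}"] assms(4) by simp

lemma outcome_prob_parallelogram:
  "outcome_prob S M oc (\<lambda>a. x a + y a) + outcome_prob S M oc (\<lambda>a. x a - y a)
   = 2 * outcome_prob S M oc x + 2 * outcome_prob S M oc y"
proof -
  have "cnj (x a + y a) * M oc a b * (x b + y b) + cnj (x a - y a) * M oc a b * (x b - y b)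
      = 2 * (cnj (x a) * M oc a b * x b) + 2 * (cnj (y a) * M oc a b * y b)" for a b
    by (simp add: algebra_simps)
  then have "(\<Sum>a\<in>S. \<Sum>b\<in>S. cnj (x a + y a) * M oc a b * (x b + y b))
      + (\<Sum>a\<in>S. \<Sum>b\<in>S. cnj (x a - y a) * M oc a b * (x b - y b))
    = 2 * (\<Sum>a\<in>S. \<Sum>b\<in>S. cnj (x a) * M oc a b * x b)
      + 2 * (\<Sum>a\<in>S. \<Sum>b\<in>S. cnj (y a) * M oc a b * y b)"
    by (simp add: sum.distrib[symmetric] sum_distrib_left)
  from arg_cong[where f = Re, OF this] show ?thesis
    unfolding outcome_prob_def by simp
qed

lemma outcome_prob_add_le:
  assumes "is_povm S Outs M" "oc \<in> Outs"
  shows "outcome_prob S M oc (\<lambda>a. x a + y a) \<le> 2 * outcome_prob S M oc x + 2 * outcome_prob S M oc y"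
  using outcome_prob_parallelogram[of S M oc x y] outcome_prob_nonneg[OF assms, of "\<lambda>a. x a - y a"]
  by linarith

lemma outcome_prob_diff_le:
  assumes "is_povm S Outs M" "oc \<in> Outs"
  shows "outcome_prob S M oc (\<lambda>a. x a - y a) \<le> 2 * outcome_prob S M oc x + 2 * outcome_prob S M oc y"
  using outcome_prob_parallelogram[of S M oc x y] outcome_prob_nonneg[OF assms, of "\<lambda>a. x a + y a"]
  by linarith

lemma outcome_prob_basis_proj_not_le:
  assumes "is_povm S Outs M" "oc \<in> Outs"
  shows "outcome_prob S M oc (basis_proj (\<lambda>a. \<not> P a) w)
    \<le> 2 * outcome_prob S M oc w + 2 * outcome_prob S M oc (basis_proj P w)"
proof -
  have "basis_proj (\<lambda>a. \<not> P a) w = (\<lambda>a. w a - basis_proj P w a)"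
    unfolding basis_proj_def by auto
  then show ?thesis
    using outcome_prob_diff_le[OF assms, of w "basis_proj P w"] by simp
qed

lemma outcome_prob_split3_le:
  assumes "is_povm S Outs M" "oc \<in> Outs"
  shows "outcome_prob S M oc w
    \<le> 2 * outcome_prob S M oc (basis_proj (\<lambda>a. \<not> P a) w)
      + 4 * outcome_prob S M oc (basis_proj (\<lambda>a. P a \<and> \<not> R a) w)
      + 4 * outcome_prob S M oc (basis_proj (\<lambda>a. P a \<and> R a) w)"
proof -
  have "w = (\<lambda>a. basis_proj (\<lambda>a. \<not> P a) w a + basis_proj P w a)"
    unfolding basis_proj_def by auto
  then have "outcome_prob S M oc w
      \<le> 2 * outcome_prob S M oc (basis_proj (\<lambda>a. \<not> P a) w) + 2 * outcome_prob S M oc (basis_proj P w)"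
    using outcome_prob_add_le[OF assms] by metis
  moreover have "basis_proj P w
      = (\<lambda>a. basis_proj (\<lambda>a. P a \<and> \<not> R a) w a + basis_proj (\<lambda>a. P a \<and> R a) w a)"
    unfolding basis_proj_def by auto
  then have "outcome_prob S M oc (basis_proj P w)
      \<le> 2 * outcome_prob S M oc (basis_proj (\<lambda>a. P a \<and> \<not> R a) w)
        + 2 * outcome_prob S M oc (basis_proj (\<lambda>a. P a \<and> R a) w)"
    using outcome_prob_add_le[OF assms] by metis
  ultimately show ?thesis by linarith
qed

lemma lists_length_0_eq: "{xs. set xs \<subseteq> X \<and> length xs = 0} = {[]}"
  by auto

lemma sum_lists_length_Suc:
  assumes "finite X"
  shows "(\<Sum>xs\<in>{xs. set xs \<subseteq> X \<and> length xs = Suc m}. g xs)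
    = (\<Sum>x\<in>X. \<Sum>xs\<in>{xs. set xs \<subseteq> X \<and> length xs = m}. g (x # xs))"
proof -
  let ?L = "{xs. set xs \<subseteq> X \<and> length xs = m}"
  have "inj_on (\<lambda>(xs, x). x # xs) (?L \<times> X)"
    by (auto simp: inj_on_def)
  then have "(\<Sum>xs\<in>{xs. set xs \<subseteq> X \<and> length xs = Suc m}. g xs) = (\<Sum>(xs, x)\<in>?L \<times> X. g (x # xs))"
    by (simp add: lists_length_Suc_eq sum.reindex case_prod_unfold)
  also have "\<dots> = (\<Sum>x\<in>X. \<Sum>xs\<in>?L. g (x # xs))"
    by (simp add: sum.cartesian_product[symmetric] sum.swap[of _ X])
  finally show ?thesis .
qed

text \<open>
  Here prod_list (map p xs) is the probability of xs under m independent draws from p; the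
  bounds on sums with of_bool are the union bound for one event and for two disjoint events.
\<close>

context
  fixes X :: "'a set" and p :: "'a \<Rightarrow> real"
  assumes finite: "finite X" and nonneg: "\<And>x. x \<in> X \<Longrightarrow> 0 \<le> p x" and total: "(\<Sum>x\<in>X. p x) = 1"
begin

lemma prod_list_weights_nonneg: "set xs \<subseteq> X \<Longrightarrow> 0 \<le> prod_list (map p xs)"
  by (induction xs) (auto intro!: mult_nonneg_nonneg nonneg)

lemma sum_prod_list_weights:
  "(\<Sum>xs\<in>{xs. set xs \<subseteq> X \<and> length xs = m}. prod_list (map p xs)) = 1"
proof (induction m)
  case 0
  show ?case by (simp only: lists_length_0_eq) simp
next
  case (Suc m)
  then show ?case
    by (simp add: sum_lists_length_Suc[OF finite] sum_distrib_left[symmetric] total)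
qed

lemma sum_prod_list_weights_ex_le:
  "(\<Sum>xs\<in>{xs. set xs \<subseteq> X \<and> length xs = m}. prod_list (map p xs) * of_bool (\<exists>x\<in>set xs. P x))
   \<le> m * (\<Sum>x\<in>X. p x * of_bool (P x))"
proof (induction m)
  case 0
  then show ?case by (simp add: lists_length_0_eq)
next
  case (Suc m)
  let ?L = "{xs. set xs \<subseteq> X \<and> length xs = m}"
  let ?a = "\<Sum>x\<in>X. p x * of_bool (P x)"
  have "(\<Sum>xs\<in>{xs. set xs \<subseteq> X \<and> length xs = Suc m}. prod_list (map p xs) * of_bool (\<exists>x\<in>set xs. P x))
      = (\<Sum>x\<in>X. \<Sum>xs\<in>?L. p x * (prod_list (map p xs) * of_bool (P x \<or> (\<exists>x\<in>set xs. P x))))"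
    by (simp add: sum_lists_length_Suc[OF finite] mult.assoc)
  also have "\<dots> \<le> (\<Sum>x\<in>X. \<Sum>xs\<in>?L. p x * of_bool (P x) * prod_list (map p xs)
      + p x * (prod_list (map p xs) * of_bool (\<exists>x\<in>set xs. P x)))"
    using nonneg prod_list_weights_nonneg
    by (intro sum_mono) (auto simp: algebra_simps mult_nonneg_nonneg)
  also have "\<dots> = ?a * (\<Sum>xs\<in>?L. prod_list (map p xs))
      + (\<Sum>x\<in>X. p x) * (\<Sum>xs\<in>?L. prod_list (map p xs) * of_bool (\<exists>x\<in>set xs. P x))"
    by (simp only: sum.distrib sum_product)
  also have "\<dots> \<le> ?a + m * ?a"
    using Suc by (simp add: sum_prod_list_weights total)
  finally show ?case by (simp add: algebra_simps)
qed

lemma sum_prod_list_weights_ex_ex_le: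
  assumes disjoint: "\<And>x. \<not> (P x \<and> Q x)"
  shows "(\<Sum>xs\<in>{xs. set xs \<subseteq> X \<and> length xs = m}.
      prod_list (map p xs) * of_bool ((\<exists>x\<in>set xs. P x) \<and> (\<exists>x\<in>set xs. Q x)))
    \<le> (real m)\<^sup>2 * (\<Sum>x\<in>X. p x * of_bool (P x)) * (\<Sum>x\<in>X. p x * of_bool (Q x))"
proof (induction m)
  case 0
  then show ?case by (simp add: lists_length_0_eq)
next
  case (Suc m)
  let ?L = "{xs. set xs \<subseteq> X \<and> length xs = m}"
  let ?w = "\<lambda>xs. prod_list (map p xs)"
  let ?a = "\<Sum>x\<in>X. p x * of_bool (P x)"
  let ?b = "\<Sum>x\<in>X. p x * of_bool (Q x)"
  have ab: "0 \<le> ?a" "0 \<le> ?b"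
    using nonneg by (auto intro!: sum_nonneg)
  have "(\<Sum>xs\<in>{xs. set xs \<subseteq> X \<and> length xs = Suc m}.
        ?w xs * of_bool ((\<exists>x\<in>set xs. P x) \<and> (\<exists>x\<in>set xs. Q x)))
      = (\<Sum>x\<in>X. \<Sum>xs\<in>?L. p x * (?w xs
          * of_bool ((P x \<or> (\<exists>x\<in>set xs. P x)) \<and> (Q x \<or> (\<exists>x\<in>set xs. Q x)))))"
    by (simp add: sum_lists_length_Suc[OF finite] mult.assoc)
  also have "\<dots> \<le> (\<Sum>x\<in>X. \<Sum>xs\<in>?L.
        p x * of_bool (P x) * (?w xs * of_bool (\<exists>x\<in>set xs. Q x))
      + p x * of_bool (Q x) * (?w xs * of_bool (\<exists>x\<in>set xs. P x))
      + p x * (?w xs * of_bool ((\<exists>x\<in>set xs. P x) \<and> (\<exists>x\<in>set xs. Q x))))"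
    using nonneg prod_list_weights_nonneg disjoint
    by (intro sum_mono) (auto simp: algebra_simps mult_nonneg_nonneg)
  also have "\<dots> = ?a * (\<Sum>xs\<in>?L. ?w xs * of_bool (\<exists>x\<in>set xs. Q x))
      + ?b * (\<Sum>xs\<in>?L. ?w xs * of_bool (\<exists>x\<in>set xs. P x))
      + (\<Sum>x\<in>X. p x) * (\<Sum>xs\<in>?L. ?w xs * of_bool ((\<exists>x\<in>set xs. P x) \<and> (\<exists>x\<in>set xs. Q x)))"
    by (simp only: sum.distrib sum_product)
  also have "\<dots> \<le> ?a * (m * ?b) + ?b * (m * ?a) + (real m)\<^sup>2 * ?a * ?b"
    using Suc sum_prod_list_weights_ex_le[of P m] sum_prod_list_weights_ex_le[of Q m] ab total
    by (intro add_mono mult_left_mono) auto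
  also have "\<dots> \<le> (real (Suc m))\<^sup>2 * ?a * ?b"
    using ab by (simp add: algebra_simps power2_eq_square)
  finally show ?case .
qed

end

lemma sum_PiE_indicator_point:
  fixes f :: "('a \<Rightarrow> 'b) \<Rightarrow> real"
  assumes "finite A" "finite B" "p \<in> A" "y \<in> B"
    and indep: "\<And>H c. H \<in> A \<rightarrow>\<^sub>E B \<Longrightarrow> c \<in> B \<Longrightarrow> f (H(p := c)) = f H"
  shows "(\<Sum>H\<in>A \<rightarrow>\<^sub>E B. of_bool (H p = y) * f H) = (\<Sum>H\<in>A \<rightarrow>\<^sub>E B. f H) / card B"
proof -
  let ?F = "A \<rightarrow>\<^sub>E B"
  have upd: "H(p := c) \<in> ?F" if "H \<in> ?F" "c \<in> B" for H c
    using that \<open>p \<in> A\<close> by (auto simp: PiE_iff extensional_def)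
  have same_for_all: "(\<Sum>H\<in>?F. of_bool (H p = c) * f H) = (\<Sum>H\<in>?F. of_bool (H p = y) * f H)"
    if "c \<in> B" for c
  proof -
    have "(\<Sum>H\<in>?F \<inter> {H. H p = c}. f H) = (\<Sum>H\<in>?F \<inter> {H. H p = y}. f H)"
      by (rule sum.reindex_bij_witness[where i = "\<lambda>H. H(p := c)" and j = "\<lambda>H. H(p := y)"])
        (use upd indep \<open>c \<in> B\<close> \<open>y \<in> B\<close> in auto)
    then show ?thesis
      using \<open>finite A\<close> \<open>finite B\<close> by (simp add: finite_PiE)
  qed
  have "(\<Sum>H\<in>?F. f H) = (\<Sum>H\<in>?F. \<Sum>c\<in>B. of_bool (H p = c) * f H)"
    using \<open>finite B\<close> \<open>p \<in> A\<close> by (intro sum.cong) (auto simp: PiE_iff)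
  also have "\<dots> = (\<Sum>c\<in>B. \<Sum>H\<in>?F. of_bool (H p = c) * f H)"
    by (rule sum.swap)
  also have "\<dots> = (\<Sum>c\<in>B. \<Sum>H\<in>?F. of_bool (H p = y) * f H)"
    by (rule sum.cong[OF refl same_for_all])
  finally have "(\<Sum>H\<in>?F. f H) = card B * (\<Sum>H\<in>?F. of_bool (H p = y) * f H)"
    by simp
  moreover have "card B > 0"
    using \<open>finite B\<close> \<open>y \<in> B\<close> card_gt_0_iff by blast
  ultimately show ?thesis
    by (simp add: field_simps)
qed

lemma finite_bits: "finite (bits n)"
  using finite_lists_length_eq[of "UNIV :: bool set" n] by (simp add: bits_def)

lemma card_bits: "card (bits n) = 2 ^ n"
  using card_lists_length_eq[of "UNIV :: bool set" n] by (simp add: bits_def)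

lemma basis_eq: "basis u v m = {xs. set xs \<subseteq> bits (u+1) \<times> bits v \<and> length xs = m}"
  unfolding basis_def by auto

lemma basis_no_copies: "basis u v 0 = {[]}"
  by (auto simp: basis_def)

lemma finite_basis: "finite (basis u v m)"
  unfolding basis_eq by (simp add: finite_lists_length_eq finite_bits)

lemma finite_outputs: "finite (outputs u v)"
  unfolding outputs_def by (simp add: finite_bits)

abbreviation oracles :: "nat \<Rightarrow> nat \<Rightarrow> (bool list \<Rightarrow> bool list) set" where
  "oracles u v \<equiv> bits (u+1) \<rightarrow>\<^sub>E bits v"

lemma finite_oracles: "finite (oracles u v)"
  by (simp add: finite_PiE finite_bits)

lemma card_oracles_pos: "card (oracles u v) > 0"
proof -
  have "(\<lambda>R\<in>bits (u+1). replicate v False) \<in> oracles u v"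
    by (auto simp: bits_def)
  then show ?thesis
    using finite_oracles card_gt_0_iff by blast
qed

lemma sq_cmod_psi: "(cmod (psi u H x))\<^sup>2 = of_bool (snd x = H (fst x)) / 2 ^ (u+1)"
  unfolding psi_def by (simp add: norm_divide power_divide real_sqrt_pow2)

lemma sq_cmod_psi_tensor:
  "(cmod (psi_tensor u H xs))\<^sup>2 = prod_list (map (\<lambda>x. (cmod (psi u H x))\<^sup>2) xs)"
  unfolding psi_tensor_def by (induction xs) (simp_all add: norm_mult power_mult_distrib)

lemma sum_sq_cmod_psi:
  assumes "H \<in> oracles u v"
  shows "(\<Sum>x\<in>bits (u+1) \<times> bits v. (cmod (psi u H x))\<^sup>2 * f (fst x))
    = (\<Sum>R\<in>bits (u+1). f R) / 2 ^ (u+1)"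
proof -
  have unique_value: "(\<Sum>y\<in>bits v. of_bool (y = H R) * c) = c" if "R \<in> bits (u+1)" for R and c :: real
  proof -
    have "bits v \<inter> {y. y = H R} = {H R}"
      using that assms by auto
    then show ?thesis
      by (simp add: finite_bits)
  qed
  have "(\<Sum>x\<in>bits (u+1) \<times> bits v. (cmod (psi u H x))\<^sup>2 * f (fst x))
      = (\<Sum>R\<in>bits (u+1). \<Sum>y\<in>bits v. of_bool (y = H R) * (f R / 2 ^ (u+1)))"
    by (simp add: sum.cartesian_product' sq_cmod_psi)
  also have "\<dots> = (\<Sum>R\<in>bits (u+1). f R / 2 ^ (u+1))"
    by (rule sum.cong[OF refl unique_value])
  finally show ?thesis
    by (simp add: sum_divide_distrib)
qed

lemma sum_sq_cmod_psi_total: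
  "H \<in> oracles u v \<Longrightarrow> (\<Sum>x\<in>bits (u+1) \<times> bits v. (cmod (psi u H x))\<^sup>2) = 1"
  using sum_sq_cmod_psi[of H u v "\<lambda>_. 1"] by (simp add: card_bits)

lemma sum_sq_cmod_psi_point:
  assumes "H \<in> oracles u v" "A \<in> bits (u+1)"
  shows "(\<Sum>x\<in>bits (u+1) \<times> bits v. (cmod (psi u H x))\<^sup>2 * of_bool (fst x = A)) = 1 / 2 ^ (u+1)"
  using sum_sq_cmod_psi[OF assms(1), of "\<lambda>R. of_bool (R = A)"] assms(2) by (simp add: finite_bits)

lemma sq_norm_psi_tensor:
  assumes "H \<in> oracles u v"
  shows "sq_norm_on (basis u v m) (psi_tensor u H) = 1"
  unfolding sq_norm_on_def basis_eq sq_cmod_psi_tensor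
  using sum_sq_cmod_psi_total[OF assms] by (intro sum_prod_list_weights) (simp_all add: finite_bits)

lemma mem_fst_set_iff: "A \<in> fst ` set xs \<longleftrightarrow> (\<exists>x\<in>set xs. fst x = A)"
  by force

lemma sq_norm_queried_le:
  assumes "H \<in> oracles u v" "A \<in> bits (u+1)"
  shows "sq_norm_on (basis u v m) (basis_proj (\<lambda>xs. A \<in> fst ` set xs) (psi_tensor u H))
    \<le> m / 2 ^ (u+1)"
proof -
  have "(\<Sum>xs\<in>{xs. set xs \<subseteq> bits (u+1) \<times> bits v \<and> length xs = m}.
        prod_list (map (\<lambda>x. (cmod (psi u H x))\<^sup>2) xs) * of_bool (\<exists>x\<in>set xs. fst x = A))
      \<le> m * (\<Sum>x\<in>bits (u+1) \<times> bits v. (cmod (psi u H x))\<^sup>2 * of_bool (fst x = A))"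
    by (rule sum_prod_list_weights_ex_le)
      (use sum_sq_cmod_psi_total[OF assms(1)] in \<open>simp_all add: finite_bits\<close>)
  then show ?thesis
    unfolding sq_norm_on_basis_proj basis_eq sq_cmod_psi_tensor mem_fst_set_iff
      sum_sq_cmod_psi_point[OF assms] by simp
qed

lemma sq_norm_queried_both_le:
  assumes "H \<in> oracles u v" "A \<in> bits (u+1)" "B \<in> bits (u+1)" "A \<noteq> B"
  shows "sq_norm_on (basis u v m)
      (basis_proj (\<lambda>xs. A \<in> fst ` set xs \<and> B \<in> fst ` set xs) (psi_tensor u H))
    \<le> (m / 2 ^ (u+1))\<^sup>2"
proof -
  have "(\<Sum>xs\<in>{xs. set xs \<subseteq> bits (u+1) \<times> bits v \<and> length xs = m}.
        prod_list (map (\<lambda>x. (cmod (psi u H x))\<^sup>2) xs)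
        * of_bool ((\<exists>x\<in>set xs. fst x = A) \<and> (\<exists>x\<in>set xs. fst x = B)))
      \<le> (real m)\<^sup>2 * (\<Sum>x\<in>bits (u+1) \<times> bits v. (cmod (psi u H x))\<^sup>2 * of_bool (fst x = A))
        * (\<Sum>x\<in>bits (u+1) \<times> bits v. (cmod (psi u H x))\<^sup>2 * of_bool (fst x = B))"
    using \<open>A \<noteq> B\<close>
    by (intro sum_prod_list_weights_ex_ex_le)
      (use sum_sq_cmod_psi_total[OF assms(1)] in \<open>auto simp: finite_bits\<close>)
  then show ?thesis
    unfolding sq_norm_on_basis_proj basis_eq sq_cmod_psi_tensor mem_fst_set_iff
      sum_sq_cmod_psi_point[OF assms(1,2)] sum_sq_cmod_psi_point[OF assms(1,3)]
    by (simp add: power_divide power2_eq_square)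
qed

lemma psi_tensor_fun_upd:
  "p \<notin> fst ` set xs \<Longrightarrow> psi_tensor u (H(p := c)) xs = psi_tensor u H xs"
  unfolding psi_tensor_def psi_def by (intro arg_cong[where f = prod_list] map_cong) force+

lemma basis_proj_psi_tensor_fun_upd:
  "(\<And>xs. P xs \<Longrightarrow> p \<notin> fst ` set xs)
    \<Longrightarrow> basis_proj P (psi_tensor u (H(p := c))) = basis_proj P (psi_tensor u H)"
  unfolding basis_proj_def by (auto simp: psi_tensor_fun_upd)

abbreviation psi_miss1
    :: "nat \<Rightarrow> (bool list \<Rightarrow> bool list) \<Rightarrow> bool list \<Rightarrow> (bool list \<times> bool list) list \<Rightarrow> complex"
  where "psi_miss1 u H r \<equiv> basis_proj (\<lambda>xs. True # r \<notin> fst ` set xs) (psi_tensor u H)"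

abbreviation psi_hit1_miss0
    :: "nat \<Rightarrow> (bool list \<Rightarrow> bool list) \<Rightarrow> bool list \<Rightarrow> (bool list \<times> bool list) list \<Rightarrow> complex"
  where "psi_hit1_miss0 u H r \<equiv>
    basis_proj (\<lambda>xs. True # r \<in> fst ` set xs \<and> False # r \<notin> fst ` set xs) (psi_tensor u H)"

abbreviation psi_hit_both
    :: "nat \<Rightarrow> (bool list \<Rightarrow> bool list) \<Rightarrow> bool list \<Rightarrow> (bool list \<times> bool list) list \<Rightarrow> complex"
  where "psi_hit_both u H r \<equiv>
    basis_proj (\<lambda>xs. True # r \<in> fst ` set xs \<and> False # r \<in> fst ` set xs) (psi_tensor u H)"

abbreviation correct_guess :: "(bool list \<Rightarrow> bool list) \<Rightarrow> bool list \<Rightarrow> bool list \<Rightarrow> bool list \<Rightarrow> real"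
  where "correct_guess H r y0 y1 \<equiv> of_bool (y0 = H (False # r) \<and> y1 = H (True # r))"

lemma sum_sq_norm_queried_le:
  assumes "H \<in> oracles u v"
  shows "(\<Sum>r\<in>bits u. sq_norm_on (basis u v m) (basis_proj (\<lambda>xs. b # r \<in> fst ` set xs) (psi_tensor u H)))
    \<le> m / 2"
proof -
  have "(\<Sum>r\<in>bits u. sq_norm_on (basis u v m) (basis_proj (\<lambda>xs. b # r \<in> fst ` set xs) (psi_tensor u H)))
      \<le> (\<Sum>r\<in>bits u. m / 2 ^ (u+1))"
    using assms by (intro sum_mono sq_norm_queried_le) (auto simp: bits_def)
  also have "\<dots> = m / 2"
    by (simp add: card_bits)
  finally show ?thesis .
qed

lemma sum_sq_norm_psi_hit_both_le:
  assumes "H \<in> oracles u v"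
  shows "(\<Sum>r\<in>bits u. sq_norm_on (basis u v m) (psi_hit_both u H r)) \<le> (real m)\<^sup>2 / (4 * 2 ^ u)"
proof -
  have "(\<Sum>r\<in>bits u. sq_norm_on (basis u v m) (psi_hit_both u H r))
      \<le> (\<Sum>r\<in>bits u. (m / 2 ^ (u+1))\<^sup>2)"
    using assms by (intro sum_mono sq_norm_queried_both_le) (auto simp: bits_def)
  also have "\<dots> = (real m)\<^sup>2 / (4 * 2 ^ u)"
    by (simp add: card_bits power_divide power_add power2_eq_square field_simps)
  finally show ?thesis .
qed

lemma sum_oracles_outputs_indicator:
  fixes g :: "bool list \<Rightarrow> bool list \<Rightarrow> bool list \<Rightarrow> (bool list \<Rightarrow> bool list) \<Rightarrow> real"
  assumes "\<And>r y0 y1. (r, y0, y1) \<in> outputs u v \<Longrightarrow> p r y0 y1 \<in> bits (u+1)"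
    and "\<And>r y0 y1. (r, y0, y1) \<in> outputs u v \<Longrightarrow> y r y0 y1 \<in> bits v"
    and "\<And>r y0 y1 H c. (r, y0, y1) \<in> outputs u v \<Longrightarrow> H \<in> oracles u v \<Longrightarrow> c \<in> bits v
      \<Longrightarrow> g r y0 y1 (H(p r y0 y1 := c)) = g r y0 y1 H"
  shows "(\<Sum>H\<in>oracles u v. \<Sum>(r, y0, y1)\<in>outputs u v. of_bool (H (p r y0 y1) = y r y0 y1) * g r y0 y1 H)
    = (\<Sum>H\<in>oracles u v. \<Sum>(r, y0, y1)\<in>outputs u v. g r y0 y1 H) / 2 ^ v"
proof -
  have "(\<Sum>H\<in>oracles u v. of_bool (H (p r y0 y1) = y r y0 y1) * g r y0 y1 H)
      = (\<Sum>H\<in>oracles u v. g r y0 y1 H) / 2 ^ v" if "(r, y0, y1) \<in> outputs u v" for r y0 y1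
    using sum_PiE_indicator_point[where A = "bits (u+1)" and B = "bits v" and p = "p r y0 y1"
        and y = "y r y0 y1" and f = "g r y0 y1", OF finite_bits finite_bits] assms that
    by (simp add: card_bits)
  then have "(\<Sum>(r, y0, y1)\<in>outputs u v. \<Sum>H\<in>oracles u v. of_bool (H (p r y0 y1) = y r y0 y1) * g r y0 y1 H)
      = (\<Sum>(r, y0, y1)\<in>outputs u v. (\<Sum>H\<in>oracles u v. g r y0 y1 H) / 2 ^ v)"
    by (intro sum.cong) auto
  also have "\<dots> = (\<Sum>(r, y0, y1)\<in>outputs u v. \<Sum>H\<in>oracles u v. g r y0 y1 H) / 2 ^ v"
    by (simp add: sum_divide_distrib case_prod_unfold)
  finally show ?thesis
    by (simp add: sum.swap[of _ "outputs u v"] case_prod_unfold)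
qed

lemma sum_outputs_correct_guess:
  fixes g :: "bool list \<Rightarrow> bool list \<Rightarrow> bool list \<Rightarrow> real"
  assumes "H \<in> oracles u v"
  shows "(\<Sum>(r, y0, y1)\<in>outputs u v. correct_guess H r y0 y1 * g r y0 y1)
    = (\<Sum>r\<in>bits u. g r (H (False # r)) (H (True # r)))"
proof -
  have "(\<Sum>(y0, y1)\<in>bits v \<times> bits v. correct_guess H r y0 y1 * g r y0 y1)
      = g r (H (False # r)) (H (True # r))" if "r \<in> bits u" for r
  proof -
    have "H (False # r) \<in> bits v" "H (True # r) \<in> bits v"
      using assms that by (auto simp: bits_def)
    then show ?thesis
      by (simp add: finite_bits sum.cartesian_product' of_bool_conj mult.assoc flip: sum_distrib_left)
  qed
  then show ?thesis
    unfolding outputs_def sum.cartesian_product' by (auto intro!: sum.cong)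
qed

lemma success_prob_eq:
  "success_prob u v m M
    = (\<Sum>H\<in>oracles u v. \<Sum>(r, y0, y1)\<in>outputs u v. correct_guess H r y0 y1
        * outcome_prob (basis u v m) M (r, y0, y1) (psi_tensor u H)) / card (oracles u v)"
  unfolding success_prob_def
  by (simp add: finite_outputs case_prod_unfold Int_def)

context
  fixes u v m :: nat and M
  assumes povm: "is_povm (basis u v m) (outputs u v) M"
begin

abbreviation prob where "prob \<equiv> outcome_prob (basis u v m) M"

lemma sum_outcome_prob_fiber_le:
  "(\<Sum>(r, y0, y1)\<in>outputs u v. prob (r, y0, y1) (w r)) \<le> (\<Sum>r\<in>bits u. sq_norm_on (basis u v m) (w r))"
proof -
  have "(\<Sum>z\<in>bits v \<times> bits v. prob (r, z) (w r)) \<le> sq_norm_on (basis u v m) (w r)"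
    if "r \<in> bits u" for r
  proof -
    have "(\<Sum>z\<in>bits v \<times> bits v. prob (r, z) (w r)) = (\<Sum>oc\<in>Pair r ` (bits v \<times> bits v). prob oc (w r))"
      by (subst sum.reindex) (auto simp: inj_on_def)
    also have "\<dots> \<le> sq_norm_on (basis u v m) (w r)"
      using povm that
      by (intro sum_outcome_prob_subset_le) (auto simp: finite_basis finite_bits outputs_def)
    finally show ?thesis .
  qed
  then show ?thesis
    unfolding outputs_def sum.cartesian_product' by (simp add: case_prod_unfold sum_mono)
qed

lemma sum_outcome_prob_miss1_le:
  assumes "H \<in> oracles u v"
  shows "(\<Sum>(r, y0, y1)\<in>outputs u v. prob (r, y0, y1) (psi_miss1 u H r)) \<le> 2 + m"
proof -
  let ?hit1 = "\<lambda>r. basis_proj (\<lambda>xs. True # r \<in> fst ` set xs) (psi_tensor u H)"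
  have "(\<Sum>(r, y0, y1)\<in>outputs u v. prob (r, y0, y1) (psi_miss1 u H r))
    \<le> (\<Sum>(r, y0, y1)\<in>outputs u v. 2 * prob (r, y0, y1) (psi_tensor u H) + 2 * prob (r, y0, y1) (?hit1 r))"
    using outcome_prob_basis_proj_not_le[OF povm] by (intro sum_mono) auto
  also have "\<dots> = 2 * (\<Sum>oc\<in>outputs u v. prob oc (psi_tensor u H))
      + 2 * (\<Sum>(r, y0, y1)\<in>outputs u v. prob (r, y0, y1) (?hit1 r))"
    by (simp add: case_prod_unfold sum.distrib sum_distrib_left)
  also have "\<dots> \<le> 2 * 1 + 2 * (m / 2)"
    using sum_outcome_prob[OF povm finite_basis] sq_norm_psi_tensor[OF assms]
      sum_outcome_prob_fiber_le[of ?hit1] sum_sq_norm_queried_le[OF assms, of m True]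
    by simp
  finally show ?thesis
    by simp
qed

lemma correct_guess_outcome_prob_split_le:
  assumes "(r, y0, y1) \<in> outputs u v"
  shows "correct_guess H r y0 y1 * prob (r, y0, y1) (psi_tensor u H)
    \<le> 2 * (of_bool (H (True # r) = y1) * prob (r, y0, y1) (psi_miss1 u H r))
      + 4 * (of_bool (H (False # r) = y0) * prob (r, y0, y1) (psi_hit1_miss0 u H r))
      + 4 * (correct_guess H r y0 y1 * prob (r, y0, y1) (psi_hit_both u H r))"
  using outcome_prob_split3_le[OF povm assms, of "psi_tensor u H"
      "\<lambda>xs. True # r \<in> fst ` set xs" "\<lambda>xs. False # r \<in> fst ` set xs"]
    outcome_prob_nonneg[OF povm assms]
  by (auto simp: add_nonneg_nonneg)

lemma sum_guess_miss1_le: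
  "(\<Sum>H\<in>oracles u v. \<Sum>(r, y0, y1)\<in>outputs u v.
      of_bool (H (True # r) = y1) * prob (r, y0, y1) (psi_miss1 u H r))
    \<le> card (oracles u v) * (2 + real m) / 2 ^ v"
proof -
  have "(\<Sum>H\<in>oracles u v. \<Sum>(r, y0, y1)\<in>outputs u v.
      of_bool (H (True # r) = y1) * prob (r, y0, y1) (psi_miss1 u H r))
    = (\<Sum>H\<in>oracles u v. \<Sum>(r, y0, y1)\<in>outputs u v. prob (r, y0, y1) (psi_miss1 u H r)) / 2 ^ v"
    by (rule sum_oracles_outputs_indicator) (auto simp: outputs_def bits_def basis_proj_psi_tensor_fun_upd)
  also have "\<dots> \<le> card (oracles u v) * (2 + real m) / 2 ^ v"
    using sum_outcome_prob_miss1_le by (intro divide_right_mono sum_bounded_above) auto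
  finally show ?thesis .
qed

lemma sum_guess_hit1_miss0_le:
  "(\<Sum>H\<in>oracles u v. \<Sum>(r, y0, y1)\<in>outputs u v.
      of_bool (H (False # r) = y0) * prob (r, y0, y1) (psi_hit1_miss0 u H r))
    \<le> card (oracles u v) * (m / 2) / 2 ^ v"
proof -
  have indep: "psi_hit1_miss0 u (H(False # r := c)) r = psi_hit1_miss0 u H r" for r H c
    by (rule basis_proj_psi_tensor_fun_upd) simp
  have bound: "(\<Sum>(r, y0, y1)\<in>outputs u v. prob (r, y0, y1) (psi_hit1_miss0 u H r)) \<le> m / 2"
    if "H \<in> oracles u v" for H
  proof -
    have "(\<Sum>(r, y0, y1)\<in>outputs u v. prob (r, y0, y1) (psi_hit1_miss0 u H r))
      \<le> (\<Sum>r\<in>bits u. sq_norm_on (basis u v m) (psi_hit1_miss0 u H r))"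
      by (rule sum_outcome_prob_fiber_le)
    also have "\<dots> \<le> (\<Sum>r\<in>bits u.
        sq_norm_on (basis u v m) (basis_proj (\<lambda>xs. True # r \<in> fst ` set xs) (psi_tensor u H)))"
      by (intro sum_mono sq_norm_on_basis_proj_mono) simp
    also have "\<dots> \<le> m / 2"
      by (rule sum_sq_norm_queried_le[OF that])
    finally show ?thesis .
  qed
  have "(\<Sum>H\<in>oracles u v. \<Sum>(r, y0, y1)\<in>outputs u v.
      of_bool (H (False # r) = y0) * prob (r, y0, y1) (psi_hit1_miss0 u H r))
    = (\<Sum>H\<in>oracles u v. \<Sum>(r, y0, y1)\<in>outputs u v. prob (r, y0, y1) (psi_hit1_miss0 u H r)) / 2 ^ v"
    by (rule sum_oracles_outputs_indicator) (auto simp: outputs_def bits_def indep)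
  also have "\<dots> \<le> card (oracles u v) * (m / 2) / 2 ^ v"
    using bound by (intro divide_right_mono sum_bounded_above) auto
  finally show ?thesis .
qed

lemma sum_correct_guess_hit_both_le:
  "(\<Sum>H\<in>oracles u v. \<Sum>(r, y0, y1)\<in>outputs u v.
      correct_guess H r y0 y1 * prob (r, y0, y1) (psi_hit_both u H r))
    \<le> card (oracles u v) * ((real m)\<^sup>2 / (4 * 2 ^ u))"
proof (rule sum_bounded_above)
  fix H
  assume H: "H \<in> oracles u v"
  have "(\<Sum>(r, y0, y1)\<in>outputs u v. correct_guess H r y0 y1 * prob (r, y0, y1) (psi_hit_both u H r))
    = (\<Sum>r\<in>bits u. prob (r, H (False # r), H (True # r)) (psi_hit_both u H r))"
    by (rule sum_outputs_correct_guess[OF H])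
  also have "\<dots> \<le> (\<Sum>r\<in>bits u. sq_norm_on (basis u v m) (psi_hit_both u H r))"
    using H
    by (intro sum_mono outcome_prob_le_sq_norm_on[OF povm finite_basis finite_outputs])
      (auto simp: outputs_def bits_def)
  also have "\<dots> \<le> (real m)\<^sup>2 / (4 * 2 ^ u)"
    by (rule sum_sq_norm_psi_hit_both_le[OF H])
  finally show "(\<Sum>(r, y0, y1)\<in>outputs u v. correct_guess H r y0 y1 * prob (r, y0, y1) (psi_hit_both u H r))
    \<le> (real m)\<^sup>2 / (4 * 2 ^ u)" .
qed

lemma sum_correct_guess_le:
  "(\<Sum>H\<in>oracles u v. \<Sum>(r, y0, y1)\<in>outputs u v. correct_guess H r y0 y1 * prob (r, y0, y1) (psi_tensor u H))
    \<le> card (oracles u v) * ((4 + 4 * real m) / 2 ^ v + (real m)\<^sup>2 / 2 ^ u)"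
proof -
  let ?N = "real (card (oracles u v))"
  have "(\<Sum>H\<in>oracles u v. \<Sum>(r, y0, y1)\<in>outputs u v. correct_guess H r y0 y1 * prob (r, y0, y1) (psi_tensor u H))
    \<le> (\<Sum>H\<in>oracles u v. \<Sum>(r, y0, y1)\<in>outputs u v.
        2 * (of_bool (H (True # r) = y1) * prob (r, y0, y1) (psi_miss1 u H r))
      + 4 * (of_bool (H (False # r) = y0) * prob (r, y0, y1) (psi_hit1_miss0 u H r))
      + 4 * (correct_guess H r y0 y1 * prob (r, y0, y1) (psi_hit_both u H r)))"
    using correct_guess_outcome_prob_split_le by (intro sum_mono) auto
  also have "\<dots> = 2 * (\<Sum>H\<in>oracles u v. \<Sum>(r, y0, y1)\<in>outputs u v.
        of_bool (H (True # r) = y1) * prob (r, y0, y1) (psi_miss1 u H r))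
      + 4 * (\<Sum>H\<in>oracles u v. \<Sum>(r, y0, y1)\<in>outputs u v.
        of_bool (H (False # r) = y0) * prob (r, y0, y1) (psi_hit1_miss0 u H r))
      + 4 * (\<Sum>H\<in>oracles u v. \<Sum>(r, y0, y1)\<in>outputs u v.
        correct_guess H r y0 y1 * prob (r, y0, y1) (psi_hit_both u H r))"
    by (simp add: case_prod_unfold sum.distrib sum_distrib_left)
  also have "\<dots> \<le> 2 * (?N * (2 + real m) / 2 ^ v) + 4 * (?N * (m / 2) / 2 ^ v)
      + 4 * (?N * ((real m)\<^sup>2 / (4 * 2 ^ u)))"
    by (intro add_mono mult_left_mono sum_guess_miss1_le sum_guess_hit1_miss0_le
        sum_correct_guess_hit_both_le) simp_all
  also have "\<dots> = ?N * ((4 + 4 * real m) / 2 ^ v + (real m)\<^sup>2 / 2 ^ u)"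
    by (simp add: field_simps)
  finally show ?thesis .
qed

lemma sum_correct_guess_no_copies_le:
  assumes "m = 0"
  shows "(\<Sum>H\<in>oracles u v. \<Sum>(r, y0, y1)\<in>outputs u v. correct_guess H r y0 y1 * prob (r, y0, y1) (psi_tensor u H))
    \<le> card (oracles u v) / 2 ^ v"
proof -
  have no_input: "prob oc (psi_tensor u H) = prob oc (\<lambda>_. 1)" for oc H
    by (rule outcome_prob_cong) (simp add: assms basis_no_copies psi_tensor_def)
  have "(\<Sum>H\<in>oracles u v. \<Sum>(r, y0, y1)\<in>outputs u v. correct_guess H r y0 y1 * prob (r, y0, y1) (psi_tensor u H))
    \<le> (\<Sum>H\<in>oracles u v. \<Sum>(r, y0, y1)\<in>outputs u v. of_bool (H (True # r) = y1) * prob (r, y0, y1) (\<lambda>_. 1))"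
    using outcome_prob_nonneg[OF povm] by (intro sum_mono) (auto simp: no_input)
  also have "\<dots> = (\<Sum>H\<in>oracles u v. \<Sum>(r, y0, y1)\<in>outputs u v. prob (r, y0, y1) (\<lambda>_. 1)) / 2 ^ v"
    by (rule sum_oracles_outputs_indicator) (auto simp: outputs_def bits_def)
  also have "\<dots> = card (oracles u v) / 2 ^ v"
    using sum_outcome_prob[OF povm finite_basis, of "\<lambda>_. 1"]
    by (simp add: case_prod_unfold sq_norm_on_def assms basis_no_copies)
  finally show ?thesis .
qed

lemma success_prob_le_of_sum_le:
  fixes b :: real
  assumes "(\<Sum>H\<in>oracles u v. \<Sum>(r, y0, y1)\<in>outputs u v.
      correct_guess H r y0 y1 * prob (r, y0, y1) (psi_tensor u H)) \<le> card (oracles u v) * b"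
  shows "success_prob u v m M \<le> b"
  using assms card_oracles_pos[of u v] by (simp add: success_prob_eq divide_le_eq mult.commute)

end

lemma copies_bound_le:
  fixes a b :: real
  assumes "1 \<le> m" "0 \<le> a" "0 \<le> b"
  shows "(4 + 4 * m) * b + m\<^sup>2 * a \<le> (2 * m + 1) ^ 4 * (a + b)"
proof -
  have "(2 * m + 1)\<^sup>2 \<le> (2 * m + 1) ^ 4"
    by (rule power_increasing) (use assms(1) in auto)
  moreover have "1 \<le> m * m"
    using mult_mono[OF assms(1) assms(1)] assms(1) by simp
  then have "4 + 4 * m \<le> (2 * m + 1)\<^sup>2" "m\<^sup>2 \<le> (2 * m + 1)\<^sup>2"
    using assms(1) by (simp_all add: power2_eq_square algebra_simps)
  ultimately have "4 + 4 * m \<le> (2 * m + 1) ^ 4" "m\<^sup>2 \<le> (2 * m + 1) ^ 4"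
    by linarith+
  then have "(4 + 4 * m) * b \<le> (2 * m + 1) ^ 4 * b" "m\<^sup>2 * a \<le> (2 * m + 1) ^ 4 * a"
    using assms(2,3) by (simp_all add: mult_right_mono)
  then show ?thesis
    by (simp add: distrib_left)
qed

theorem mainTheorem4:
  fixes u v m :: nat
    and M :: "bool list \<times> bool list \<times> bool list \<Rightarrow> (bool list \<times> bool list) list \<Rightarrow> (bool list \<times> bool list) list \<Rightarrow> complex"
  assumes "u > 0" and "v > 0"
    and "is_povm (basis u v m) (outputs u v) M"
  shows "success_prob u v m M \<le> (2 * real m + 1) ^ 4 * (2 powr (- real u) + 2 powr (- real v))"
proof -
  have powr: "2 powr (- real n) = 1 / 2 ^ n" for n
    by (simp add: powr_minus powr_realpow divide_inverse)
  show ?thesis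
  proof (cases "m = 0")
    case True
    then have "success_prob u v m M \<le> 1 / 2 ^ v"
      using success_prob_le_of_sum_le[OF assms(3)] sum_correct_guess_no_copies_le[OF assms(3)] by simp
    also have "\<dots> \<le> 1 / 2 ^ u + 1 / 2 ^ v"
      by simp
    finally show ?thesis
      using True by (simp add: powr)
  next
    case False
    then have "success_prob u v m M \<le> (4 + 4 * real m) * (1 / 2 ^ v) + (real m)\<^sup>2 * (1 / 2 ^ u)"
      using success_prob_le_of_sum_le[OF assms(3) sum_correct_guess_le[OF assms(3)]] by simp
    also have "\<dots> \<le> (2 * real m + 1) ^ 4 * (1 / 2 ^ u + 1 / 2 ^ v)"
      using False by (intro copies_bound_le) auto
    finally show ?thesis
      by (simp add: powr)
  qed
qed

end
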